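(* A tree has a good subgraph if and only if it has a good subgraph that is a tree (a good subtree).
   Context: Graphs are finite. A leaf is a vertex of degree one. Good subgraph: Let $H$ be a graph, $Q$ a subgraph of $H$ without isolated vertices, and $E_Q^-$ the set of edges of $H$ not in $Q$ incident with at least one vertex of $Q$. $Q$ is a good subgraph of $H$ if there exist a set of edges $E$ with $E_Q^-\subseteq E\subseteq E_H\setminus E_Q$ and an orientation $A_E$ of the edges of $E$ (where $d^+(x)$, $d^-(x)$ denote the numbers of arcs of $A_E$ leaving, resp. entering $x$, and $d_H(x)$ is the degree in $H$) such that the arcs of $A_E$ form a family $\mathcal P=\{P_x: x\in V_Q\}$ of oriented paths indexed by the vertices of $Q$ with: (i) every vertex $v$ of $Q$ is the initial vertex of exactly one path of $\mathcal P$, and $d^+(v)=1$, $d^-(v)=d_H(v)-d_Q(v)-1$; (ii) if $x$ is an inner vertex of a path of $\mathcal P$, then $d^+(x)=1$ and $d^-(x)=d_H(x)-1$; (iii) if $x$ is an end vertex of a path of $\mathcal P$, then $d^-(x)<d_H(x)$. *)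

theory Defs
  imports Main
begin

definition graph :: "'a set \<Rightarrow> 'a set set \<Rightarrow> bool" where
  "graph V E \<longleftrightarrow> finite V \<and> (\<forall>e\<in>E. \<exists>u v. e = {u, v} \<and> u \<noteq> v \<and> u \<in> V \<and> v \<in> V)"

definition degree :: "'a set set \<Rightarrow> 'a \<Rightarrow> nat" where
  "degree E x = card {e \<in> E. x \<in> e}"

definition adj :: "'a set set \<Rightarrow> 'a \<Rightarrow> 'a \<Rightarrow> bool" where
  "adj E u v \<longleftrightarrow> {u, v} \<in> E \<and> u \<noteq> v"

definition connected_graph :: "'a set \<Rightarrow> 'a set set \<Rightarrow> bool" where
  "connected_graph V E \<longleftrightarrow>
     (\<forall>u\<in>V. \<forall>v\<in>V. (u, v) \<in> {(x, y). adj E x y}\<^sup>*)"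

definition is_cycle :: "'a set set \<Rightarrow> 'a list \<Rightarrow> bool" where
  "is_cycle E c \<longleftrightarrow> length c \<ge> 3 \<and> distinct c \<and>
     (\<forall>i. Suc i < length c \<longrightarrow> adj E (c ! i) (c ! Suc i)) \<and> adj E (last c) (hd c)"

definition acyclic_graph :: "'a set set \<Rightarrow> bool" where
  "acyclic_graph E \<longleftrightarrow> \<not> (\<exists>c. is_cycle E c)"

definition tree :: "'a set \<Rightarrow> 'a set set \<Rightarrow> bool" where
  "tree V E \<longleftrightarrow> graph V E \<and> V \<noteq> {} \<and> connected_graph V E \<and> acyclic_graph E"

definition subgraph :: "'a set \<Rightarrow> 'a set set \<Rightarrow> 'a set \<Rightarrow> 'a set set \<Rightarrow> bool" where
  "subgraph VQ EQ V E \<longleftrightarrow> graph VQ EQ \<and> VQ \<subseteq> V \<and> EQ \<subseteq> E"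

definition no_isolated :: "'a set \<Rightarrow> 'a set set \<Rightarrow> bool" where
  "no_isolated VQ EQ \<longleftrightarrow> (\<forall>v\<in>VQ. \<exists>e\<in>EQ. v \<in> e)"

definition boundary_edges :: "'a set set \<Rightarrow> 'a set \<Rightarrow> 'a set set \<Rightarrow> 'a set set" where
  "boundary_edges E VQ EQ = {e \<in> E - EQ. e \<inter> VQ \<noteq> {}}"

definition orientation :: "'a set set \<Rightarrow> ('a \<times> 'a) set \<Rightarrow> bool" where
  "orientation F A \<longleftrightarrow> (\<forall>(u, v)\<in>A. {u, v} \<in> F \<and> (v, u) \<notin> A) \<and>
     (\<forall>e\<in>F. \<exists>(u, v)\<in>A. e = {u, v})"

definition outdeg :: "('a \<times> 'a) set \<Rightarrow> 'a \<Rightarrow> nat" where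
  "outdeg A x = card {y. (x, y) \<in> A}"

definition indeg :: "('a \<times> 'a) set \<Rightarrow> 'a \<Rightarrow> nat" where
  "indeg A x = card {y. (y, x) \<in> A}"

definition path_arcs :: "'a list \<Rightarrow> ('a \<times> 'a) set" where
  "path_arcs p = {(p ! i, p ! Suc i) | i. Suc i < length p}"

definition inner_vertices :: "'a list \<Rightarrow> 'a set" where
  "inner_vertices p = {p ! i | i. 0 < i \<and> Suc i < length p}"

definition good_subgraph :: "'a set \<Rightarrow> 'a set set \<Rightarrow> 'a set \<Rightarrow> 'a set set \<Rightarrow> bool" where
  "good_subgraph V E VQ EQ \<longleftrightarrow>
     subgraph VQ EQ V E \<and> no_isolated VQ EQ \<and> EQ \<noteq> {} \<and>
     (\<exists>F A P.
        boundary_edges E VQ EQ \<subseteq> F \<and> F \<subseteq> E - EQ \<and>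
        orientation F A \<and>
        \<comment> \<open>the arcs of A form a family of oriented paths indexed by V_Q\<close>
        (\<forall>x\<in>VQ. P x \<noteq> [] \<and> distinct (P x)) \<and>
        A = (\<Union>x\<in>VQ. path_arcs (P x)) \<and>
        (\<forall>x\<in>VQ. \<forall>y\<in>VQ. x \<noteq> y \<longrightarrow> path_arcs (P x) \<inter> path_arcs (P y) = {}) \<and>
        \<comment> \<open>(i)\<close>
        (\<forall>v\<in>VQ. (\<exists>!x. x \<in> VQ \<and> hd (P x) = v) \<and> outdeg A v = 1 \<and>
           int (indeg A v) = int (degree E v) - int (degree EQ v) - 1) \<and>
        \<comment> \<open>(ii)\<close>
        (\<forall>x\<in>VQ. \<forall>y\<in>inner_vertices (P x).
           outdeg A y = 1 \<and> int (indeg A y) = int (degree E y) - 1) \<and>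
        \<comment> \<open>(iii)\<close>
        (\<forall>x\<in>VQ. indeg A (last (P x)) < degree E (last (P x))))"

end

theory Submission
  imports Defs "HOL-Library.Transitive_Closure_Table"
begin

text \<open>
  Let \<open>Q\<close> be good, witnessed by the path family \<open>P\<close>. A vertex of \<open>Q\<close> is never an inner
  vertex of a path (its in-degree conditions would force \<open>d\<^sub>Q = 0\<close>), so every arc entering
  \<open>Q\<close> is the last arc of a path that starts in \<open>Q\<close>. If no arc enters a component \<open>C\<close> of \<open>Q\<close>,
  then the first arcs of the paths starting in \<open>C\<close>, taken as one-arc paths, show that \<open>C\<close> is
  good, and \<open>C\<close> is a tree. Such a component exists: if the component of the start \<open>w\<close> of a
  path ending with the arc \<open>(b, a)\<close> is entered by an arc \<open>(b', a')\<close>, then, the host being a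
  tree, the branch at \<open>b'\<close> away from \<open>a'\<close> lies strictly inside the branch at \<open>b\<close> away from
  \<open>a\<close>. Hence for an entering arc whose branch is smallest, no arc enters the component of
  the start of its path.
\<close>

abbreviation reach :: "'a set set \<Rightarrow> ('a \<times> 'a) set" where
  "reach E \<equiv> {(x, y). adj E x y}\<^sup>*"

definition component :: "'a set set \<Rightarrow> 'a \<Rightarrow> 'a set" where
  "component E w = {v. (w, v) \<in> reach E}"

definition induced_edges :: "'a set set \<Rightarrow> 'a set \<Rightarrow> 'a set set" where
  "induced_edges E C = {e \<in> E. e \<subseteq> C}"

lemma reach_iff_rtranclp: "(x, y) \<in> reach E \<longleftrightarrow> (adj E)\<^sup>*\<^sup>* x y"
  by (simp add: rtrancl_def)

lemma adj_sym: "adj E x y \<Longrightarrow> adj E y x"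
  unfolding adj_def by (auto simp: insert_commute)

lemma adj_mono: "E1 \<subseteq> E2 \<Longrightarrow> adj E1 x y \<Longrightarrow> adj E2 x y"
  unfolding adj_def by blast

lemma reach_sym: "(x, y) \<in> reach E \<Longrightarrow> (y, x) \<in> reach E"
proof -
  have "sym {(x, y). adj E x y}"
    by (auto intro: symI adj_sym)
  then show "(x, y) \<in> reach E \<Longrightarrow> (y, x) \<in> reach E"
    by (meson sym_rtrancl symD)
qed

lemma reach_mono: "E1 \<subseteq> E2 \<Longrightarrow> (x, y) \<in> reach E1 \<Longrightarrow> (x, y) \<in> reach E2"
  by (metis reach_iff_rtranclp adj_mono mono_rtranclp)

lemma reach_in_Union: "(x, y) \<in> reach E \<Longrightarrow> y = x \<or> y \<in> \<Union>E"
  by (induction rule: rtrancl_induct) (auto simp: adj_def)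

lemma reach_nth_chain:
  "(\<forall>j<k. adj E (p ! j) (p ! Suc j)) \<Longrightarrow> (p ! 0, p ! k) \<in> reach E"
  by (induction k) (auto intro: rtrancl_into_rtrancl)

lemma reach_delete_edge:
  assumes "(x, z) \<in> reach E" and "(x, b) \<notin> reach E" and "b \<in> e"
  shows "(x, z) \<in> reach (E - {e})"
  using assms(1)
proof (induction rule: rtrancl_induct)
  case (step y z)
  then have "b \<notin> {y, z}"
    using assms(2) by (auto intro: rtrancl_into_rtrancl)
  with step show ?case
    using assms(3) by (auto simp: adj_def intro: rtrancl_into_rtrancl)
qed simp

lemma rtrancl_path_successively:
  "rtrancl_path r x xs y \<Longrightarrow> successively r (x # xs) \<and> last (x # xs) = y"
  by (induction rule: rtrancl_path.induct) auto

lemma acyclic_graph_mono: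
  assumes "E1 \<subseteq> E2" "acyclic_graph E2"
  shows "acyclic_graph E1"
proof -
  have "is_cycle E2 c" if "is_cycle E1 c" for c
    using that adj_mono[OF assms(1)] by (auto simp: is_cycle_def)
  then show ?thesis
    using assms(2) by (auto simp: acyclic_graph_def)
qed

lemma acyclic_graph_edge_bridge:
  assumes acyclic: "acyclic_graph E" and ab: "{a, b} \<in> E" "a \<noteq> b"
  shows "(b, a) \<notin> reach (E - {{a, b}})"
proof
  let ?E' = "E - {{a, b}}"
  assume "(b, a) \<in> reach ?E'"
  then obtain xs where "rtrancl_path (adj ?E') b xs a"
    by (auto simp: reach_iff_rtranclp rtranclp_eq_rtrancl_path)
  then obtain ys where ys: "rtrancl_path (adj ?E') b ys a" "distinct (b # ys)"
    by (rule rtrancl_path_distinct)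
  let ?c = "b # ys"
  have chain: "successively (adj ?E') ?c" and last_c: "last ?c = a"
    using rtrancl_path_successively[OF ys(1)] by auto
  have "length ?c \<ge> 3"
  proof (cases ys)
    case Nil
    then show ?thesis using last_c ab(2) by simp
  next
    case (Cons y ys')
    have "ys' \<noteq> []"
    proof
      assume "ys' = []"
      then have "adj ?E' b a" using chain last_c Cons by simp
      then show False by (auto simp: adj_def insert_commute)
    qed
    then show ?thesis using Cons by (cases ys') auto
  qed
  moreover have "adj E (?c ! i) (?c ! Suc i)" if "Suc i < length ?c" for i
    using successively_nth[OF chain that] adj_mono[of ?E' E] by blast
  moreover have "adj E (last ?c) (hd ?c)"
    using last_c ab by (simp add: adj_def)
  ultimately have "is_cycle E ?c"
    using ys(2) by (simp add: is_cycle_def)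
  then show False
    using acyclic by (auto simp: acyclic_graph_def)
qed

lemma graph_edgeE:
  assumes "graph V E" "e \<in> E"
  obtains u v where "e = {u, v}" "u \<noteq> v" "u \<in> V" "v \<in> V"
  using assms unfolding graph_def by meson

lemma graph_edge_subset: "graph V E \<Longrightarrow> e \<in> E \<Longrightarrow> e \<subseteq> V"
  by (metis graph_edgeE empty_subsetI insert_subset)

lemma graph_edge_neq: "graph V E \<Longrightarrow> {u, v} \<in> E \<Longrightarrow> u \<noteq> v"
  by (metis graph_edgeE doubleton_eq_iff)

lemma component_closed:
  assumes "graph V E" "v \<in> component E w" "e \<in> E" "v \<in> e"
  shows "e \<subseteq> component E w"
proof -
  obtain p q where e: "e = {p, q}"
    using graph_edgeE[OF assms(1,3)] by metis
  then have "adj E v p \<or> v = p" "adj E v q \<or> v = q"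
    using assms(3,4) by (auto simp: adj_def insert_commute)
  then show ?thesis
    using assms(2) e by (auto simp: component_def intro: rtrancl_into_rtrancl)
qed

lemma component_subset:
  assumes "graph V E" "w \<in> V"
  shows "component E w \<subseteq> V"
proof
  fix v assume "v \<in> component E w"
  then have "v = w \<or> v \<in> \<Union>E"
    unfolding component_def by (blast dest: reach_in_Union)
  then show "v \<in> V"
    using assms graph_edge_subset by blast
qed

lemma degree_induced_component:
  assumes "graph V E" "v \<in> component E w"
  shows "degree (induced_edges E (component E w)) v = degree E v"
proof -
  have "{e \<in> induced_edges E (component E w). v \<in> e} = {e \<in> E. v \<in> e}"
    using component_closed[OF assms] by (auto simp: induced_edges_def)
  then show ?thesis
    by (simp add: degree_def)
qed

lemma reach_induced_component:
  assumes "graph V E" "(w, v) \<in> reach E"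
  shows "(w, v) \<in> reach (induced_edges E (component E w))"
  using assms(2)
proof (induction rule: rtrancl_induct)
  case (step p q)
  then have "{p, q} \<subseteq> component E w"
    using component_closed[OF assms(1), of p w "{p, q}"] by (auto simp: adj_def component_def)
  with step show ?case
    by (auto simp: adj_def induced_edges_def intro: rtrancl_into_rtrancl)
qed simp

lemma graph_component:
  assumes "graph V E" "w \<in> V"
  shows "graph (component E w) (induced_edges E (component E w))"
proof -
  let ?C = "component E w"
  have "finite ?C"
    using component_subset[OF assms] assms(1) finite_subset by (auto simp: graph_def)
  moreover have "\<exists>u v. e = {u, v} \<and> u \<noteq> v \<and> u \<in> ?C \<and> v \<in> ?C"
    if "e \<in> induced_edges E ?C" for e
    using that graph_edgeE[OF assms(1)] unfolding induced_edges_def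
    by (metis (no_types, lifting) insert_subset mem_Collect_eq)
  ultimately show ?thesis
    by (simp add: graph_def)
qed

lemma tree_component:
  assumes "graph V E" "acyclic_graph E" "w \<in> V"
  shows "tree (component E w) (induced_edges E (component E w))"
  unfolding tree_def
proof (intro conjI)
  let ?C = "component E w"
  show "graph ?C (induced_edges E ?C)"
    using graph_component assms(1,3) .
  show "?C \<noteq> {}"
    by (auto simp: component_def)
  have "(u, v) \<in> reach (induced_edges E ?C)" if "u \<in> ?C" "v \<in> ?C" for u v
    using that reach_induced_component[OF assms(1)] reach_sym rtrancl_trans
    unfolding component_def by (metis mem_Collect_eq)
  then show "connected_graph ?C (induced_edges E ?C)"
    by (simp add: connected_graph_def)
  show "acyclic_graph (induced_edges E ?C)"
    using assms(2) by (rule acyclic_graph_mono[rotated]) (auto simp: induced_edges_def)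
qed

definition branch :: "'a set set \<Rightarrow> 'a \<Rightarrow> 'a \<Rightarrow> 'a set" where
  "branch E b a = component (E - {{a, b}}) b"

lemma finite_branch:
  assumes "graph V E"
  shows "finite (branch E b a)"
proof (rule finite_subset)
  have "\<Union>(E - {{a, b}}) \<subseteq> V"
    using graph_edge_subset[OF assms] by blast
  then show "branch E b a \<subseteq> insert b V"
    unfolding branch_def component_def by (blast dest: reach_in_Union)
  show "finite (insert b V)"
    using assms by (simp add: graph_def)
qed

lemma path_arcs_pair: "path_arcs [x, y] = {(x, y)}"
  unfolding path_arcs_def by (auto simp: less_Suc_eq)

lemma inner_vertices_pair: "inner_vertices [x, y] = {}"
  unfolding inner_vertices_def by auto

lemma inner_vertexI: "0 < i \<Longrightarrow> Suc i < length p \<Longrightarrow> p ! i \<in> inner_vertices p"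
  unfolding inner_vertices_def by blast

locale good_witness =
  fixes V :: "'a set" and E :: "'a set set" and VQ :: "'a set" and EQ :: "'a set set"
    and F :: "'a set set" and A :: "('a \<times> 'a) set" and P :: "'a \<Rightarrow> 'a list"
  assumes graph: "graph V E"
    and subgraph: "subgraph VQ EQ V E" and no_isolated: "no_isolated VQ EQ"
    and boundary_in_F: "boundary_edges E VQ EQ \<subseteq> F" and F_sub: "F \<subseteq> E - EQ"
    and orientation: "orientation F A"
    and "\<forall>x\<in>VQ. P x \<noteq> [] \<and> distinct (P x)"
    and arcs_eq: "A = (\<Union>x\<in>VQ. path_arcs (P x))"
    and "\<forall>x\<in>VQ. \<forall>y\<in>VQ. x \<noteq> y \<longrightarrow> path_arcs (P x) \<inter> path_arcs (P y) = {}"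
    and start_cond: "\<forall>v\<in>VQ. (\<exists>!x. x \<in> VQ \<and> hd (P x) = v) \<and> outdeg A v = 1 \<and>
           int (indeg A v) = int (degree E v) - int (degree EQ v) - 1"
    and inner_cond: "\<forall>x\<in>VQ. \<forall>y\<in>inner_vertices (P x).
           outdeg A y = 1 \<and> int (indeg A y) = int (degree E y) - 1"
    and end_cond: "\<forall>x\<in>VQ. indeg A (last (P x)) < degree E (last (P x))"

lemma good_subgraph_witness:
  assumes "graph V E" "good_subgraph V E VQ EQ"
  obtains F A P where "good_witness V E VQ EQ F A P" and "EQ \<noteq> {}"
  using assms unfolding good_subgraph_def good_witness_def by auto

context good_witness
begin

lemma finite_V: "finite V"
  using graph by (simp add: graph_def)

lemma graph_Q: "graph VQ EQ"
  using subgraph by (simp add: subgraph_def)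

lemma finite_VQ: "finite VQ"
  using graph_Q by (simp add: graph_def)

lemma arc_edge: "(u, v) \<in> A \<Longrightarrow> {u, v} \<in> E \<and> {u, v} \<notin> EQ"
  using orientation F_sub by (auto simp: orientation_def)

lemma arc_antisym: "(u, v) \<in> A \<Longrightarrow> (v, u) \<notin> A"
  using orientation by (auto simp: orientation_def)

lemma arc_adj: "(u, v) \<in> A \<Longrightarrow> adj E u v"
  using arc_edge graph_edge_neq[OF graph] by (simp add: adj_def)

lemma finite_arcs: "finite A"
proof (rule finite_subset)
  show "A \<subseteq> V \<times> V"
    using arc_edge graph_edge_subset[OF graph] by (auto intro: subrelI)
  show "finite (V \<times> V)"
    using finite_V by simp
qed

lemma finite_in_arcs: "finite {u. (u, v) \<in> A}"
proof (rule finite_subset)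
  show "{u. (u, v) \<in> A} \<subseteq> fst ` A"
    by force
  show "finite (fst ` A)"
    using finite_arcs by simp
qed

lemma finite_EQ: "finite EQ"
proof (rule finite_subset)
  show "EQ \<subseteq> Pow VQ"
    using graph_edge_subset[OF graph_Q] by auto
  show "finite (Pow VQ)"
    using finite_VQ by simp
qed

lemma degree_Q_pos: "v \<in> VQ \<Longrightarrow> degree EQ v > 0"
  using no_isolated finite_EQ by (auto simp: no_isolated_def degree_def card_gt_0_iff)

lemma VQ_not_inner:
  assumes "v \<in> VQ" "x \<in> VQ"
  shows "v \<notin> inner_vertices (P x)"
proof
  assume "v \<in> inner_vertices (P x)"
  then have "int (indeg A v) = int (degree E v) - 1"
    using inner_cond assms(2) by blast
  moreover have "int (indeg A v) = int (degree E v) - int (degree EQ v) - 1"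
    using start_cond assms(1) by blast
  ultimately show False
    using degree_Q_pos[OF assms(1)] by linarith
qed

lemma hd_path_in_VQ:
  assumes "x \<in> VQ"
  shows "hd (P x) \<in> VQ"
proof -
  define start where "start v = (THE x. x \<in> VQ \<and> hd (P x) = v)" for v
  have start: "start v \<in> VQ \<and> hd (P (start v)) = v" if "v \<in> VQ" for v
  proof -
    have "\<exists>!x. x \<in> VQ \<and> hd (P x) = v"
      using start_cond that by blast
    then show ?thesis
      unfolding start_def by (rule theI')
  qed
  then have "inj_on start VQ"
    by (metis inj_onI)
  then have "start ` VQ = VQ"
    using start finite_VQ endo_inj_surj by blast
  then obtain v where "v \<in> VQ" "x = start v"
    using assms by (metis imageE)
  then show ?thesis
    using start by simp
qed

lemma arc_in_path:
  assumes "(b, a) \<in> A"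
  obtains y i where "y \<in> VQ" "Suc i < length (P y)" "P y ! i = b" "P y ! Suc i = a"
proof -
  obtain y where "y \<in> VQ" "(b, a) \<in> path_arcs (P y)"
    using assms arcs_eq by blast
  then show thesis
    using that unfolding path_arcs_def by blast
qed

lemma path_arc:
  assumes "y \<in> VQ" "Suc j < length (P y)"
  shows "(P y ! j, P y ! Suc j) \<in> A"
proof -
  have "(P y ! j, P y ! Suc j) \<in> path_arcs (P y)"
    using assms(2) unfolding path_arcs_def by blast
  then show ?thesis
    using assms(1) arcs_eq by blast
qed

lemma indeg_less_degree:
  assumes "(x, z) \<in> A"
  shows "indeg A z < degree E z"
proof -
  obtain y i where y: "y \<in> VQ" "Suc i < length (P y)" "P y ! Suc i = z"
    using arc_in_path assms by metis
  show ?thesis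
  proof (cases "Suc (Suc i) < length (P y)")
    case True
    then have "z \<in> inner_vertices (P y)"
      using inner_vertexI[of "Suc i" "P y"] True y(3) by simp
    then have "int (indeg A z) = int (degree E z) - 1"
      using inner_cond y(1) by blast
    then show ?thesis
      by linarith
  next
    case False
    then have "length (P y) = Suc (Suc i)"
      using y(2) by simp
    then have "last (P y) = z"
      using y(3) by (metis last_conv_nth list.size(3) nat.distinct(1) diff_Suc_1)
    then show ?thesis
      using end_cond y(1) by blast
  qed
qed

lemma out_arc_unique:
  assumes "x \<in> VQ"
  shows "\<exists>!z. (x, z) \<in> A"
proof -
  have "card {z. (x, z) \<in> A} = 1"
    using start_cond assms by (simp add: outdeg_def)
  then obtain z where "{z. (x, z) \<in> A} = {z}"
    by (auto simp: card_1_singleton_iff)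
  then show ?thesis
    by (metis (mono_tags) mem_Collect_eq singleton_iff)
qed

lemma component_Q_subset: "w \<in> VQ \<Longrightarrow> component EQ w \<subseteq> VQ"
  by (rule component_subset[OF graph_Q])

lemma start_reaches_entering_arc:
  assumes "(b, a) \<in> A" "a \<in> VQ"
  obtains w where "w \<in> VQ"
    and "\<And>a' b'. (b', a') \<in> A \<Longrightarrow> a' \<in> VQ \<Longrightarrow> (w, b) \<in> reach (E - {{a', b'}})"
proof -
  obtain y i where y: "y \<in> VQ" "Suc i < length (P y)" "P y ! i = b" "P y ! Suc i = a"
    using arc_in_path assms(1) by metis
  have "hd (P y) = P y ! 0"
    using y(2) by (metis hd_conv_nth less_nat_zero_code list.size(3))
  then have start: "P y ! 0 \<in> VQ"
    using hd_path_in_VQ y(1) by metis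
  have "(P y ! 0, b) \<in> reach (E - {{a', b'}})" if a'b': "(b', a') \<in> A" "a' \<in> VQ" for a' b'
  proof -
    have "adj (E - {{a', b'}}) (P y ! j) (P y ! Suc j)" if j: "j < i" for j
    proof -
      have arc: "(P y ! j, P y ! Suc j) \<in> A"
        using path_arc y(1,2) j by simp
      have "P y ! Suc j \<in> inner_vertices (P y)"
        using inner_vertexI[of "Suc j" "P y"] y(2) j by simp
      then have "P y ! Suc j \<noteq> a'"
        using VQ_not_inner a'b'(2) y(1) by blast
      moreover have "(P y ! j, P y ! Suc j) \<noteq> (a', b')"
        using arc a'b'(1) arc_antisym by blast
      ultimately have "{P y ! j, P y ! Suc j} \<noteq> {a', b'}"
        by (auto simp: doubleton_eq_iff)
      then show ?thesis
        using arc_adj[OF arc] by (simp add: adj_def)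
    qed
    then show ?thesis
      using reach_nth_chain y(3) by metis
  qed
  then show thesis
    using that start by blast
qed

lemma branch_shrinks:
  assumes acyclic: "acyclic_graph E"
    and ba: "(b, a) \<in> A" and a: "a \<in> VQ"
    and w: "\<And>a' b'. (b', a') \<in> A \<Longrightarrow> a' \<in> VQ \<Longrightarrow> (w, b) \<in> reach (E - {{a', b'}})"
    and wQ: "w \<in> VQ" and b'a': "(b', a') \<in> A" and a'C: "a' \<in> component EQ w"
  shows "branch E b' a' \<subset> branch E b a"
proof -
  have a'Q: "a' \<in> VQ"
    using component_Q_subset wQ a'C by blast
  have wa': "(w, a') \<in> reach EQ"
    using a'C by (simp add: component_def)
  have EQ_sub: "EQ \<subseteq> E - {{v, u}}" if "(u, v) \<in> A" for u v
    using subgraph arc_edge[OF that] by (auto simp: subgraph_def insert_commute)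
  have bridge: "(u, v) \<notin> reach (E - {{v, u}})" if "(u, v) \<in> A" for u v
    using acyclic_graph_edge_bridge[OF acyclic, of v u] arc_edge[OF that] arc_adj[OF that]
    by (simp add: adj_def insert_commute)
  have ba': "(b, a') \<in> reach (E - {{a, b}})"
    using reach_sym[OF w[OF ba a]] reach_mono[OF EQ_sub[OF ba] wa'] by (rule rtrancl_trans)
  have a'b: "(a', b) \<in> reach (E - {{a', b'}})"
    using reach_sym[OF reach_mono[OF EQ_sub[OF b'a'] wa']] w[OF b'a' a'Q] by (rule rtrancl_trans)
  have "{a', b'} \<noteq> {a, b}"
    using ba' bridge[OF ba] ba b'a' arc_antisym by (auto simp: doubleton_eq_iff)
  then have "adj (E - {{a, b}}) a' b'"
    using adj_sym[OF arc_adj[OF b'a']] by (auto simp: adj_def insert_commute)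
  then have bb': "(b, b') \<in> reach (E - {{a, b}})"
    using ba' by (auto intro: rtrancl_into_rtrancl)
  have b'b: "(b', b) \<notin> reach (E - {{a', b'}})"
    using bridge[OF b'a'] reach_sym[OF a'b] by (meson rtrancl_trans)
  have "branch E b' a' \<subseteq> branch E b a"
  proof
    fix z assume "z \<in> branch E b' a'"
    then have "(b', z) \<in> reach (E - {{a', b'}})"
      by (simp add: branch_def component_def)
    then have "(b', z) \<in> reach (E - {{a', b'}} - {{a, b}})"
      using b'b by (rule reach_delete_edge) simp
    then have "(b', z) \<in> reach (E - {{a, b}})"
      by (rule reach_mono[rotated]) blast
    then show "z \<in> branch E b a"
      using bb' by (simp add: branch_def component_def)
  qed
  moreover have "a' \<in> branch E b a" "a' \<notin> branch E b' a'"
    using ba' bridge[OF b'a'] by (simp_all add: branch_def component_def)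
  ultimately show ?thesis
    by blast
qed

lemma source_component_exists:
  assumes acyclic: "acyclic_graph E" and "VQ \<noteq> {}"
  shows "\<exists>w\<in>VQ. \<forall>v\<in>component EQ w. \<forall>u. (u, v) \<notin> A"
proof -
  have "\<exists>w\<in>VQ. \<forall>v\<in>component EQ w. \<forall>u. (u, v) \<notin> A" if "(b, a) \<in> A" "a \<in> VQ" for b a
    using that
  proof (induction "card (branch E b a)" arbitrary: b a rule: less_induct)
    case less
    obtain w where w: "w \<in> VQ"
      "\<And>a' b'. (b', a') \<in> A \<Longrightarrow> a' \<in> VQ \<Longrightarrow> (w, b) \<in> reach (E - {{a', b'}})"
      using start_reaches_entering_arc[OF less.prems] by metis
    show ?case
    proof (cases "\<forall>v\<in>component EQ w. \<forall>u. (u, v) \<notin> A")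
      case True
      then show ?thesis
        using w(1) by blast
    next
      case False
      then obtain a' b' where a'b': "(b', a') \<in> A" "a' \<in> component EQ w"
        by blast
      have "card (branch E b' a') < card (branch E b a)"
        using branch_shrinks[OF acyclic less.prems w(2,1) a'b'] finite_branch[OF graph]
        by (rule psubset_card_mono[rotated])
      moreover have "a' \<in> VQ"
        using component_Q_subset[OF w(1)] a'b'(2) by (rule subsetD)
      ultimately show ?thesis
        using less.hyps a'b'(1) by blast
    qed
  qed
  moreover obtain w where "w \<in> VQ"
    using assms(2) by blast
  ultimately show ?thesis
    using component_Q_subset by (meson subsetD)
qed

lemma source_component_orientation:
  assumes wQ: "w \<in> VQ" and source: "\<forall>v\<in>component EQ w. \<forall>u. (u, v) \<notin> A"
    and succ: "\<And>x. x \<in> VQ \<Longrightarrow> (x, succ x) \<in> A"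
  shows "orientation (boundary_edges E (component EQ w) (induced_edges EQ (component EQ w)))
           {(x, succ x) | x. x \<in> component EQ w}"
    (is "orientation (boundary_edges E ?C ?EC) ?A'")
proof -
  have CQ: "?C \<subseteq> VQ"
    using component_Q_subset[OF wQ] .
  have A'_sub: "?A' \<subseteq> A"
    using CQ succ by blast
  have "{p, q} \<in> boundary_edges E ?C ?EC \<and> (q, p) \<notin> ?A'" if "(p, q) \<in> ?A'" for p q
    using that A'_sub arc_edge[of p q] arc_antisym[of p q]
    by (auto simp: boundary_edges_def induced_edges_def)
  moreover have "\<exists>(p, q)\<in>?A'. e = {p, q}" if e: "e \<in> boundary_edges E ?C ?EC" for e
  proof -
    obtain v where v: "v \<in> e" "v \<in> ?C" "e \<in> E" "e \<notin> ?EC"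
      using e by (auto simp: boundary_edges_def)
    have "e \<notin> EQ"
      using v component_closed[OF graph_Q v(2) _ v(1)] by (auto simp: induced_edges_def)
    then have "e \<in> F"
      using v CQ boundary_in_F by (auto simp: boundary_edges_def)
    then obtain p q where pq: "(p, q) \<in> A" "e = {p, q}"
      using orientation by (auto simp: orientation_def)
    have "q \<noteq> v"
      using source v(2) pq(1) by blast
    then have "p = v"
      using v(1) pq(2) by auto
    then have "q = succ v"
      using out_arc_unique succ CQ v(2) pq(1) by blast
    then show ?thesis
      using v(2) pq(2) \<open>p = v\<close> by blast
  qed
  ultimately show ?thesis
    unfolding orientation_def by blast
qed

lemma good_source_component:
  assumes wQ: "w \<in> VQ" and source: "\<forall>v\<in>component EQ w. \<forall>u. (u, v) \<notin> A"
  shows "good_subgraph V E (component EQ w) (induced_edges EQ (component EQ w))"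
proof -
  let ?C = "component EQ w" and ?EC = "induced_edges EQ (component EQ w)"
  define succ where "succ x = (THE z. (x, z) \<in> A)" for x
  have succ: "(x, succ x) \<in> A" if "x \<in> VQ" for x
    unfolding succ_def using out_arc_unique[OF that] by (rule theI')
  define A' where "A' = {(x, succ x) | x. x \<in> ?C}"
  define P' where "P' x = [x, succ x]" for x
  have CQ: "?C \<subseteq> VQ"
    using component_Q_subset[OF wQ] .
  have A'_sub: "A' \<subseteq> A"
    using CQ succ by (auto simp: A'_def)
  have closed: "e \<in> ?EC" if "v \<in> ?C" "e \<in> EQ" "v \<in> e" for v e
    using component_closed[OF graph_Q that] that(2) by (simp add: induced_edges_def)
  have no_isolated_C: "no_isolated ?C ?EC"
    using no_isolated CQ closed unfolding no_isolated_def by blast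
  have subgraph_C: "subgraph ?C ?EC V E"
    using graph_component[OF graph_Q wQ] CQ subgraph
    by (auto simp: subgraph_def induced_edges_def)
  have "w \<in> ?C"
    by (simp add: component_def)
  then have "?EC \<noteq> {}"
    using no_isolated_C by (auto simp: no_isolated_def)
  moreover have "orientation (boundary_edges E ?C ?EC) A'"
    unfolding A'_def using source_component_orientation[OF wQ source succ] .
  moreover have "\<forall>x\<in>?C. P' x \<noteq> [] \<and> distinct (P' x)"
    using succ CQ arc_adj by (auto simp: P'_def adj_def)
  moreover have "A' = (\<Union>x\<in>?C. path_arcs (P' x))"
    by (auto simp: A'_def P'_def path_arcs_pair)
  moreover have "\<forall>x\<in>?C. \<forall>y\<in>?C. x \<noteq> y \<longrightarrow> path_arcs (P' x) \<inter> path_arcs (P' y) = {}"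
    by (simp add: P'_def path_arcs_pair)
  moreover have "(\<exists>!x. x \<in> ?C \<and> hd (P' x) = v) \<and> outdeg A' v = 1 \<and>
      int (indeg A' v) = int (degree E v) - int (degree ?EC v) - 1" if v: "v \<in> ?C" for v
  proof -
    have "{z. (v, z) \<in> A'} = {succ v}"
      using v by (auto simp: A'_def)
    then have "outdeg A' v = 1"
      by (simp add: outdeg_def)
    moreover have "{u. (u, v) \<in> A'} = {}" "{u. (u, v) \<in> A} = {}"
      using source v A'_sub by blast+
    then have "indeg A' v = 0" "indeg A v = 0"
      by (simp_all only: indeg_def card.empty)
    moreover have "int (indeg A v) = int (degree E v) - int (degree EQ v) - 1"
      using start_cond v CQ by blast
    moreover have "degree ?EC v = degree EQ v"
      using degree_induced_component[OF graph_Q v] .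
    ultimately show ?thesis
      using v by (auto simp: P'_def)
  qed
  moreover have "indeg A' (last (P' x)) < degree E (last (P' x))" if "x \<in> ?C" for x
  proof -
    have "indeg A' (succ x) \<le> indeg A (succ x)"
      unfolding indeg_def using A'_sub by (intro card_mono finite_in_arcs) blast
    also have "\<dots> < degree E (succ x)"
      using indeg_less_degree succ CQ that by blast
    finally show ?thesis
      by (simp add: P'_def)
  qed
  ultimately show ?thesis
    unfolding good_subgraph_def using subgraph_C no_isolated_C
    by (intro conjI exI[of _ "boundary_edges E ?C ?EC"] exI[of _ A'] exI[of _ P'])
      (auto simp: P'_def boundary_edges_def inner_vertices_pair)
qed

end

lemma good_subtree_exists:
  assumes tree: "tree V E" and good: "good_subgraph V E VQ EQ"
  shows "\<exists>VQ' EQ'. good_subgraph V E VQ' EQ' \<and> tree VQ' EQ'"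
proof -
  have graph: "graph V E" and acyclic: "acyclic_graph E"
    using tree by (simp_all add: tree_def)
  obtain F A P where "good_witness V E VQ EQ F A P" and "EQ \<noteq> {}"
    using good_subgraph_witness[OF graph good] .
  then interpret good_witness V E VQ EQ F A P
    by simp
  have "VQ \<noteq> {}"
    using \<open>EQ \<noteq> {}\<close> graph_edgeE[OF graph_Q] by blast
  then obtain w where w: "w \<in> VQ" "\<forall>v\<in>component EQ w. \<forall>u. (u, v) \<notin> A"
    using source_component_exists[OF acyclic] by blast
  have "acyclic_graph EQ"
    using subgraph acyclic acyclic_graph_mono by (auto simp: subgraph_def)
  then show ?thesis
    using good_source_component[OF w] tree_component[OF graph_Q _ w(1)] by blast
qed

theorem proposition7p2:
  fixes V :: "'a set" and E :: "'a set set"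
  assumes "tree V E"
  shows "(\<exists>VQ EQ. good_subgraph V E VQ EQ) \<longleftrightarrow>
         (\<exists>VQ EQ. good_subgraph V E VQ EQ \<and> tree VQ EQ)"
  using good_subtree_exists[OF assms] by blast

end
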